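(* Let $m$ be a positive integer and $n = 2m$. If $m$ is sufficiently large, then the deterministic query complexity of $f_{n,m}$ satisfies $D(f_{n,m}) \ge m^2$.
   Context: Let $n,m$ be positive integers, $M=[n]\times[m]$ (a grid of cells with $n$ rows and $m$ columns), $\tilde M = M\cup\{\bot\}$ (pointers to cells, $\bot$ is the null pointer) and $\tilde C=[m]\cup\{\bot\}$ (pointers to columns). Let $T$ be the following fixed binary tree with $m$ leaves and $m-1$ internal nodes: if $m=2^k$, $T$ is the complete binary tree with $2^k$ leaves; if $2^k<m<2^{k+1}$, take the complete binary tree with $2^k$ leaves and add a pair of children to each of its $m-2^k$ leftmost leaves. The two outgoing arcs of each internal node are labeled 'left' and 'right', and the leaves are labeled $1,\dots,m$ from left to right. For a leaf $j$, $T(j)$ denotes the sequence of 'left'/'right' labels on the path from the root to leaf $j$. The input alphabet is $\Sigma=\{0,1\}\times\tilde M\times\tilde M\times\tilde C$; for $v\in\Sigma$ its four components are called $\mathrm{val}(v)$, $\mathrm{lpoint}(v)$, $\mathrm{rpoint}(v)$, $\mathrm{bpoint}(v)$. The function $f_{n,m}\colon\Sigma^M\to\{0,1\}$ is defined by $f_{n,m}(x)=1$ iff: (1) there is exactly one column $b\in[m]$ with $\mathrm{val}(x_{i,b})=1$ for all $i\in[n]$ (the marked column); (2) in column $b$ there is a unique cell $a$ with $x_a\ne(1,\bot,\bot,\bot)$ (the special element); (3) for each column $j\in[m]\setminus\{b\}$, the path starting at $a$ and following the pointers $\mathrm{lpoint},\mathrm{rpoint}$ as specified by the sequence $T(j)$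 exists (no pointer on it is $\bot$) and ends in a cell $\ell_j$ lying in column $j$ with $\mathrm{val}(x_{\ell_j})=0$; (4) $\mathrm{bpoint}(x_{\ell_j})=b$ for every $j\in[m]\setminus\{b\}$. $D(f)$ denotes the minimum, over deterministic decision trees computing $f$, of the maximum number of queries on any input, where a query asks for the value $x_c\in\Sigma$ of one cell $c\in M$. *)

theory Defs
  imports Main
begin

type_synonym cell = "nat \<times> nat"  (* (row, column), 1-indexed *)

(* an element of Sigma = {0,1} x ~M x ~M x ~C ; val 1 is True, bottom is None *)
type_synonym sym = "bool \<times> cell option \<times> cell option \<times> nat option"

definition cells :: "nat \<Rightarrow> nat \<Rightarrow> cell set" where
  "cells n m = {1..n} \<times> {1..m}"

definition val :: "sym \<Rightarrow> bool" where "val v = fst v"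
definition lpoint :: "sym \<Rightarrow> cell option" where "lpoint v = fst (snd v)"
definition rpoint :: "sym \<Rightarrow> cell option" where "rpoint v = fst (snd (snd v))"
definition bpoint :: "sym \<Rightarrow> nat option" where "bpoint v = snd (snd (snd v))"

definition valid_sym :: "nat \<Rightarrow> nat \<Rightarrow> sym \<Rightarrow> bool" where
  "valid_sym n m v \<longleftrightarrow>
     (\<forall>c. lpoint v = Some c \<longrightarrow> c \<in> cells n m) \<and>
     (\<forall>c. rpoint v = Some c \<longrightarrow> c \<in> cells n m) \<and>
     (\<forall>j. bpoint v = Some j \<longrightarrow> j \<in> {1..m})"

(* inputs x in Sigma^M; values outside M are irrelevant (never read) *)
definition inputs :: "nat \<Rightarrow> nat \<Rightarrow> (cell \<Rightarrow> sym) set" where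
  "inputs n m = {x. \<forall>c\<in>cells n m. valid_sym n m (x c)}"

datatype btree = Lf | Nd btree btree

fun complete :: "nat \<Rightarrow> btree" where
  "complete 0 = Lf"
| "complete (Suc k) = Nd (complete k) (complete k)"

(* add a pair of children to the r leftmost leaves; returns the number of unused additions *)
fun grow :: "nat \<Rightarrow> btree \<Rightarrow> btree \<times> nat" where
  "grow 0 t = (t, 0)"
| "grow (Suc r) Lf = (Nd Lf Lf, r)"
| "grow r (Nd l t) = (let (l', r1) = grow r l; (t', r2) = grow r1 t in (Nd l' t', r2))"

(* root-to-leaf label sequences of the leaves, from left to right; False = left, True = right *)
fun leaf_paths :: "btree \<Rightarrow> bool list list" where
  "leaf_paths Lf = [[]]"
| "leaf_paths (Nd l r) = map (Cons False) (leaf_paths l) @ map (Cons True) (leaf_paths r)"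

definition T_tree :: "nat \<Rightarrow> btree" where
  "T_tree m = (let k = (GREATEST k. 2 ^ k \<le> m) in fst (grow (m - 2 ^ k) (complete k)))"

definition T_path :: "nat \<Rightarrow> nat \<Rightarrow> bool list" where
  "T_path m j = leaf_paths (T_tree m) ! (j - 1)"

fun follow :: "(cell \<Rightarrow> sym) \<Rightarrow> cell \<Rightarrow> bool list \<Rightarrow> cell option" where
  "follow x a [] = Some a"
| "follow x a (d # ds) =
     (case (if d then rpoint (x a) else lpoint (x a)) of
        None \<Rightarrow> None
      | Some c \<Rightarrow> follow x c ds)"

definition f :: "nat \<Rightarrow> nat \<Rightarrow> (cell \<Rightarrow> sym) \<Rightarrow> bool" where
  "f n m x \<longleftrightarrow>
     (\<exists>b\<in>{1..m}.
        (\<forall>i\<in>{1..n}. val (x (i, b))) \<and>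
        (\<forall>b'\<in>{1..m}. (\<forall>i\<in>{1..n}. val (x (i, b'))) \<longrightarrow> b' = b) \<and>
        (\<exists>a\<in>cells n m. snd a = b \<and> x a \<noteq> (True, None, None, None) \<and>
           (\<forall>a'\<in>cells n m. snd a' = b \<and> x a' \<noteq> (True, None, None, None) \<longrightarrow> a' = a) \<and>
           (\<forall>j\<in>{1..m} - {b}. \<exists>l. follow x a (T_path m j) = Some l \<and> snd l = j \<and>
               \<not> val (x l) \<and> bpoint (x l) = Some b)))"

datatype dtree = Leaf bool | Query cell "sym \<Rightarrow> dtree"

primrec eval :: "dtree \<Rightarrow> (cell \<Rightarrow> sym) \<Rightarrow> bool" where
  "eval (Leaf b) x = b"
| "eval (Query c k) x = eval (k (x c)) x"

primrec cost :: "dtree \<Rightarrow> (cell \<Rightarrow> sym) \<Rightarrow> nat" where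
  "cost (Leaf b) x = 0"
| "cost (Query c k) x = Suc (cost (k (x c)) x)"

primrec queries_in :: "cell set \<Rightarrow> dtree \<Rightarrow> bool" where
  "queries_in A (Leaf b) = True"
| "queries_in A (Query c k) = (c \<in> A \<and> (\<forall>v. queries_in A (k v)))"

definition computes :: "nat \<Rightarrow> nat \<Rightarrow> dtree \<Rightarrow> bool" where
  "computes n m t \<longleftrightarrow> queries_in (cells n m) t \<and> (\<forall>x\<in>inputs n m. eval t x = f n m x)"

definition D :: "nat \<Rightarrow> nat \<Rightarrow> nat" where
  "D n m = (LEAST k. \<exists>t. computes n m t \<and> (\<forall>x\<in>inputs n m. cost t x \<le> k))"

end

theory Submission
  imports Defs
begin

text \<open>An adversary argument. The adversary answers the first \<open>m\<close> queries in a column by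
\<open>(1,\<bottom>,\<bottom>,\<bottom>)\<close> and every later one by a 0-cell whose \<open>bpoint\<close> runs through the other
columns in turn. Completing its answers by 0-cells gives an input of value 0, because every
column then contains a 0: a fully queried column has received more than \<open>m\<close> queries.
If fewer than \<open>m\<^sup>2\<close> queries were made, some column \<open>b\<close> has received at most \<open>m\<close> of its
\<open>2m\<close> queries, all answered \<open>(1,\<bottom>,\<bottom>,\<bottom>)\<close>, so it still has a free cell \<open>a\<close>; every other
column \<open>j\<close> has a free cell or, being fully queried, a recorded 0-cell pointing back to \<open>b\<close>,
which can serve as the leaf \<open>\<ell>\<^sub>j\<close>. Counting shows that at least \<open>m - 2\<close> free cells remain
outside column \<open>b\<close> for the other inner nodes of \<open>T\<close>, so the answers also extend to an
input of value 1. Hence every decision tree computing \<open>f\<close> makes at least \<open>m\<^sup>2\<close> queries on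
some input.\<close>

section \<open>Inner and leaf paths of the tree \<open>T\<close>\<close>

fun inner_paths :: "btree \<Rightarrow> bool list set" where
  "inner_paths Lf = {}"
| "inner_paths (Nd l r) = insert [] (Cons False ` inner_paths l \<union> Cons True ` inner_paths r)"

lemma finite_inner_paths: "finite (inner_paths t)"
  by (induction t) auto

lemma card_inner_paths: "card (inner_paths t) + 1 = length (leaf_paths t)"
proof (induction t)
  case (Nd l r)
  have "card (inner_paths (Nd l r)) = Suc (card (Cons False ` inner_paths l \<union> Cons True ` inner_paths r))"
    by (simp add: finite_inner_paths card_insert_if image_iff)
  also have "\<dots> = Suc (card (inner_paths l) + card (inner_paths r))"
    by (subst card_Un_disjoint) (auto simp: finite_inner_paths card_image)
  finally show ?case using Nd by simp
qed simp

lemma distinct_leaf_paths: "distinct (leaf_paths t)"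
  by (induction t) (auto simp: distinct_map)

lemma leaf_path_not_inner: "q \<in> set (leaf_paths t) \<Longrightarrow> q \<notin> inner_paths t"
  by (induction t arbitrary: q) auto

lemma take_leaf_path_inner: "q \<in> set (leaf_paths t) \<Longrightarrow> k < length q \<Longrightarrow> take k q \<in> inner_paths t"
proof (induction t arbitrary: q k)
  case (Nd l r)
  then show ?case by (cases k) auto
qed simp

lemma root_path: "[] \<in> inner_paths t \<union> set (leaf_paths t)"
  by (cases t) auto

lemma inner_path_child: "p \<in> inner_paths t \<Longrightarrow> p @ [d] \<in> inner_paths t \<union> set (leaf_paths t)"
proof (induction t arbitrary: p)
  case (Nd l r)
  then show ?case using root_path[of l] root_path[of r] by (cases p; cases d) (auto simp: image_iff)
qed simp

lemma root_inner_path: "2 \<le> length (leaf_paths t) \<Longrightarrow> [] \<in> inner_paths t"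
  by (cases t) auto

lemma length_leaf_paths_complete: "length (leaf_paths (complete k)) = 2 ^ k"
  by (induction k) auto

lemma length_leaf_paths_grow:
  "length (leaf_paths (fst (grow r t))) = length (leaf_paths t) + min r (length (leaf_paths t))
   \<and> snd (grow r t) = r - length (leaf_paths t)"
proof (induction r t rule: grow.induct)
  case (3 v l t)
  obtain l' r1 where l': "grow (Suc v) l = (l', r1)" by fastforce
  obtain t' r2 where t': "grow r1 t = (t', r2)" by fastforce
  have "grow (Suc v) (Nd l t) = (Nd l' t', r2)" using l' t' by simp
  then show ?case
    using "3.IH"(1) "3.IH"(2)[OF l'[symmetric] refl] l' t' by (auto simp: min_def)
qed simp_all

lemma greatest_power_of_two_bounds:
  fixes m :: nat
  assumes "1 \<le> m"
  shows "2 ^ (GREATEST k. 2 ^ k \<le> m) \<le> m \<and> m < 2 * 2 ^ (GREATEST k. 2 ^ k \<le> m)"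
proof -
  have bounded: "k \<le> m" if "2 ^ k \<le> m" for k :: nat
    using less_exp[of k] that by linarith
  have "2 ^ (GREATEST k. 2 ^ k \<le> m) \<le> m"
    using GreatestI_nat[of "\<lambda>k. 2 ^ k \<le> m" 0 m, OF _ bounded] assms by simp
  moreover have "\<not> 2 ^ Suc (GREATEST k. 2 ^ k \<le> m) \<le> m"
  proof
    assume "2 ^ Suc (GREATEST k. 2 ^ k \<le> m) \<le> m"
    then have "Suc (GREATEST k. 2 ^ k \<le> m) \<le> (GREATEST k. 2 ^ k \<le> m)"
      using Greatest_le_nat[of "\<lambda>k. 2 ^ k \<le> m" _ m, OF _ bounded] by blast
    then show False by simp
  qed
  ultimately show ?thesis by simp
qed

lemma length_leaf_paths_T_tree:
  assumes "1 \<le> m"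
  shows "length (leaf_paths (T_tree m)) = m"
proof -
  define k where "k = (GREATEST k. 2 ^ k \<le> m)"
  have bounds: "2 ^ k \<le> m" "m - 2 ^ k \<le> 2 ^ k"
    using greatest_power_of_two_bounds[OF assms] unfolding k_def by auto
  have "T_tree m = fst (grow (m - 2 ^ k) (complete k))"
    unfolding T_tree_def k_def by (simp only: Let_def)
  moreover have "length (leaf_paths (fst (grow (m - 2 ^ k) (complete k)))) = 2 ^ k + (m - 2 ^ k)"
    using length_leaf_paths_grow[of "m - 2 ^ k" "complete k"] bounds(2)
    by (simp add: length_leaf_paths_complete)
  ultimately show ?thesis using bounds(1) by simp
qed

lemma T_path_leaf: "j \<in> {1..m} \<Longrightarrow> T_path m j \<in> set (leaf_paths (T_tree m))"
  by (auto simp: T_path_def length_leaf_paths_T_tree intro!: nth_mem)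

lemma inj_on_T_path: "inj_on (T_path m) {1..m}"
proof (rule inj_onI)
  fix j j' assume j: "j \<in> {1..m}" and j': "j' \<in> {1..m}" and eq: "T_path m j = T_path m j'"
  then have "j - 1 = j' - 1"
    using nth_eq_iff_index_eq[OF distinct_leaf_paths] length_leaf_paths_T_tree[of m]
    by (fastforce simp: T_path_def)
  then show "j = j'" using j j' by auto
qed

lemma leaf_paths_T_tree: "1 \<le> m \<Longrightarrow> set (leaf_paths (T_tree m)) = T_path m ` {1..m}"
  by (force simp: T_path_def in_set_conv_nth length_leaf_paths_T_tree image_iff
      intro: bexI[of _ "Suc i" for i])

section \<open>Locality of \<open>f\<close> and optimal decision trees\<close>

lemma finite_cells: "finite (cells n m)"
  by (simp add: cells_def)

lemma follow_cong_cells: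
  assumes x: "x \<in> inputs n m" and agree: "\<forall>c\<in>cells n m. x' c = x c" and a: "a \<in> cells n m"
  shows "follow x' a p = follow x a p \<and> (\<forall>l. follow x a p = Some l \<longrightarrow> l \<in> cells n m)"
  using a
proof (induction p arbitrary: a)
  case (Cons d ds)
  have "x' a = x a" using agree Cons.prems by blast
  moreover have "valid_sym n m (x a)" using x Cons.prems by (simp add: inputs_def)
  ultimately show ?case
    using Cons.IH by (cases d) (auto simp: valid_sym_def split: option.split)
qed simp

lemma f_transfer_cells:
  assumes x: "x \<in> inputs n m" and agree: "\<forall>c\<in>cells n m. x' c = x c" and fx: "f n m x"
  shows "f n m x'"
proof -
  have point: "x' c = x c" if "c \<in> cells n m" for c
    using agree that by blast
  have column: "x' (i, j) = x (i, j)" if "i \<in> {1..n}" "j \<in> {1..m}" for i j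
    using that point[of "(i, j)"] by (simp add: cells_def)
  obtain b where b: "b \<in> {1..m}" and marked: "\<forall>i\<in>{1..n}. val (x (i, b))"
    and unmarked: "\<forall>b'\<in>{1..m}. (\<forall>i\<in>{1..n}. val (x (i, b'))) \<longrightarrow> b' = b"
    and "\<exists>a\<in>cells n m. snd a = b \<and> x a \<noteq> (True, None, None, None) \<and>
           (\<forall>a'\<in>cells n m. snd a' = b \<and> x a' \<noteq> (True, None, None, None) \<longrightarrow> a' = a) \<and>
           (\<forall>j\<in>{1..m} - {b}. \<exists>l. follow x a (T_path m j) = Some l \<and> snd l = j \<and>
               \<not> val (x l) \<and> bpoint (x l) = Some b)"
    using fx unfolding f_def by blast
  then obtain a where a: "a \<in> cells n m" "snd a = b" "x a \<noteq> (True, None, None, None)"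
    and special: "\<forall>a'\<in>cells n m. snd a' = b \<and> x a' \<noteq> (True, None, None, None) \<longrightarrow> a' = a"
    and leaves: "\<forall>j\<in>{1..m} - {b}. \<exists>l. follow x a (T_path m j) = Some l \<and> snd l = j \<and>
               \<not> val (x l) \<and> bpoint (x l) = Some b"
    by blast
  have "\<forall>i\<in>{1..n}. val (x' (i, b))" using marked b column by simp
  moreover have "\<forall>b'\<in>{1..m}. (\<forall>i\<in>{1..n}. val (x' (i, b'))) \<longrightarrow> b' = b"
    using unmarked column by simp
  moreover have "x' a \<noteq> (True, None, None, None)" using a point by simp
  moreover have "\<forall>a'\<in>cells n m. snd a' = b \<and> x' a' \<noteq> (True, None, None, None) \<longrightarrow> a' = a"
    using special point by simp
  moreover have "\<exists>l. follow x' a (T_path m j) = Some l \<and> snd l = j \<and> \<not> val (x' l) \<and> bpoint (x' l) = Some b"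
    if j: "j \<in> {1..m} - {b}" for j
  proof -
    obtain l where l: "follow x a (T_path m j) = Some l" "snd l = j" "\<not> val (x l)" "bpoint (x l) = Some b"
      using leaves j by blast
    then show ?thesis using follow_cong_cells[OF x agree a(1)] point by metis
  qed
  ultimately show ?thesis
    unfolding f_def using b a(1,2) by (intro bexI[of _ b] conjI bexI[of _ a]) blast+
qed

lemma f_cong_cells:
  assumes x: "x \<in> inputs n m" and agree: "\<forall>c\<in>cells n m. x' c = x c"
  shows "f n m x' = f n m x"
proof -
  have "x' \<in> inputs n m" using x agree by (simp add: inputs_def)
  then show ?thesis
    using f_transfer_cells[OF x agree] f_transfer_cells[of x' n m x] agree by (metis (mono_tags))
qed

primrec query_all :: "nat \<Rightarrow> nat \<Rightarrow> cell list \<Rightarrow> (cell \<Rightarrow> sym) \<Rightarrow> dtree" where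
  "query_all n m [] y = Leaf (f n m y)"
| "query_all n m (c # cs) y = Query c (\<lambda>v. query_all n m cs (y(c := v)))"

lemma eval_query_all: "eval (query_all n m cs y) x = f n m (\<lambda>c. if c \<in> set cs then x c else y c)"
proof (induction cs arbitrary: y)
  case (Cons c cs)
  have "(\<lambda>c'. if c' \<in> set cs then x c' else (y(c := x c)) c') =
        (\<lambda>c'. if c' \<in> set (c # cs) then x c' else y c')"
    by auto
  then show ?case using Cons by simp
qed simp

lemma cost_query_all: "cost (query_all n m cs y) x = length cs"
  by (induction cs arbitrary: y) auto

lemma queries_in_query_all: "set cs \<subseteq> A \<Longrightarrow> queries_in A (query_all n m cs y)"
  by (induction cs arbitrary: y) auto

lemma D_attained: "\<exists>t. computes n m t \<and> (\<forall>x\<in>inputs n m. cost t x \<le> D n m)"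
proof -
  obtain cs where cs: "set cs = cells n m"
    using finite_list[OF finite_cells] by blast
  have "eval (query_all n m cs y) x = f n m x" if "x \<in> inputs n m" for x y
    unfolding eval_query_all cs by (rule f_cong_cells[OF that]) simp
  then have "computes n m (query_all n m cs y)" for y
    unfolding computes_def using queries_in_query_all cs by blast
  then have "\<exists>k t. computes n m t \<and> (\<forall>x\<in>inputs n m. cost t x \<le> k)"
    by (metis cost_query_all order_refl)
  then show ?thesis
    unfolding D_def by (rule LeastI_ex)
qed

section \<open>Running a decision tree against an adversary\<close>

definition reply :: "((cell \<rightharpoonup> sym) \<Rightarrow> cell \<Rightarrow> sym) \<Rightarrow> (cell \<rightharpoonup> sym) \<Rightarrow> cell \<Rightarrow> sym" where
  "reply A \<sigma> c = (case \<sigma> c of Some v \<Rightarrow> v | None \<Rightarrow> A \<sigma> c)"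

primrec run :: "((cell \<rightharpoonup> sym) \<Rightarrow> cell \<Rightarrow> sym) \<Rightarrow> dtree \<Rightarrow> (cell \<rightharpoonup> sym) \<Rightarrow> (cell \<rightharpoonup> sym)" where
  "run A (Leaf b) \<sigma> = \<sigma>"
| "run A (Query c k) \<sigma> = run A (k (reply A \<sigma> c)) (\<sigma>(c \<mapsto> reply A \<sigma> c))"

lemma map_le_upd_reply: "\<sigma> \<subseteq>\<^sub>m \<sigma>(c \<mapsto> reply A \<sigma> c)"
  by (auto simp: map_le_def reply_def)

lemma map_le_run: "\<sigma> \<subseteq>\<^sub>m run A t \<sigma>"
proof (induction t arbitrary: \<sigma>)
  case (Query c k)
  then show ?case using map_le_upd_reply map_le_trans by (simp, blast)
qed simp

lemma run_reply_agrees: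
  assumes "run A (Query c k) \<sigma> \<subseteq>\<^sub>m Some \<circ> x"
  shows "x c = reply A \<sigma> c"
proof -
  have "\<sigma>(c \<mapsto> reply A \<sigma> c) \<subseteq>\<^sub>m Some \<circ> x"
    using map_le_run assms map_le_trans by (simp, blast)
  then show ?thesis by (force simp: map_le_def)
qed

lemma eval_eq_if_run_agrees:
  "run A t \<sigma> \<subseteq>\<^sub>m Some \<circ> x \<Longrightarrow> run A t \<sigma> \<subseteq>\<^sub>m Some \<circ> y \<Longrightarrow> eval t x = eval t y"
proof (induction t arbitrary: \<sigma>)
  case (Query c k)
  let ?v = "reply A \<sigma> c"
  have "run A (k ?v) (\<sigma>(c \<mapsto> ?v)) \<subseteq>\<^sub>m Some \<circ> x" "run A (k ?v) (\<sigma>(c \<mapsto> ?v)) \<subseteq>\<^sub>m Some \<circ> y"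
    using Query.prems by (simp_all add: comp_def)
  then have "eval (k ?v) x = eval (k ?v) y" by (rule Query.IH[OF rangeI])
  then show ?case using run_reply_agrees[OF Query.prems(1)] run_reply_agrees[OF Query.prems(2)] by simp
qed simp

lemma card_dom_run_le_cost:
  "run A t \<sigma> \<subseteq>\<^sub>m Some \<circ> x \<Longrightarrow> card (dom (run A t \<sigma>)) \<le> card (dom \<sigma>) + cost t x"
proof (induction t arbitrary: \<sigma>)
  case (Query c k)
  let ?v = "reply A \<sigma> c"
  have "run A (k ?v) (\<sigma>(c \<mapsto> ?v)) \<subseteq>\<^sub>m Some \<circ> x"
    using Query.prems by (simp add: comp_def)
  then have "card (dom (run A (k ?v) (\<sigma>(c \<mapsto> ?v)))) \<le> card (dom (\<sigma>(c \<mapsto> ?v))) + cost (k ?v) x"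
    by (rule Query.IH[OF rangeI])
  moreover have "card (dom (\<sigma>(c \<mapsto> ?v))) \<le> Suc (card (dom \<sigma>))"
    by (cases "finite (dom \<sigma>)") (auto simp: card_insert_if)
  ultimately show ?case using run_reply_agrees[OF Query.prems] by simp
qed simp

section \<open>The adversary\<close>

definition blank :: sym where
  "blank = (True, None, None, None)"

definition back_pointer :: "nat \<Rightarrow> sym" where
  "back_pointer k = (False, None, None, Some k)"

text \<open>For \<open>s < m - 1\<close>, \<open>other_column m j s\<close> enumerates the columns other than \<open>j\<close>;
the cap at \<open>m\<close> only keeps the values for larger \<open>s\<close> in range.\<close>

definition other_column :: "nat \<Rightarrow> nat \<Rightarrow> nat \<Rightarrow> nat" where
  "other_column m j s = (if s + 1 < j then s + 1 else min m (s + 2))"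

definition column_reply :: "nat \<Rightarrow> nat \<Rightarrow> nat \<Rightarrow> sym" where
  "column_reply m j t = (if t < m then blank else back_pointer (other_column m j (t - m)))"

definition queried :: "(cell \<rightharpoonup> sym) \<Rightarrow> nat \<Rightarrow> cell set" where
  "queried \<sigma> j = {c \<in> dom \<sigma>. snd c = j}"

definition adversary :: "nat \<Rightarrow> (cell \<rightharpoonup> sym) \<Rightarrow> cell \<Rightarrow> sym" where
  "adversary m \<sigma> c = column_reply m (snd c) (card (queried \<sigma> (snd c)))"

definition adversary_inv :: "nat \<Rightarrow> (cell \<rightharpoonup> sym) \<Rightarrow> bool" where
  "adversary_inv m \<sigma> \<longleftrightarrow> dom \<sigma> \<subseteq> cells (2 * m) m \<and>
     (\<forall>j. \<sigma> ` queried \<sigma> j = Some ` column_reply m j ` {..<card (queried \<sigma> j)})"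

lemma other_column_range: "1 \<le> m \<Longrightarrow> j \<le> m \<Longrightarrow> other_column m j s \<in> {1..m}"
  by (auto simp: other_column_def)

lemma other_column_surj:
  assumes "b \<in> {1..m}" "j \<in> {1..m}" "b \<noteq> j"
  shows "\<exists>s<m. other_column m j s = b"
proof (cases "b < j")
  case True
  then show ?thesis using assms by (intro exI[of _ "b - 1"]) (auto simp: other_column_def)
next
  case False
  then show ?thesis using assms by (intro exI[of _ "b - 2"]) (auto simp: other_column_def)
qed

lemma adversary_inv_empty: "adversary_inv m Map.empty"
  by (simp add: adversary_inv_def queried_def)

lemma adversary_inv_upd:
  assumes inv: "adversary_inv m \<sigma>" and c: "c \<in> cells (2 * m) m"
  shows "adversary_inv m (\<sigma>(c \<mapsto> reply (adversary m) \<sigma> c))"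
proof (cases "\<sigma> c")
  case None
  define t where "t = card (queried \<sigma> (snd c))"
  define \<sigma>' where "\<sigma>' = \<sigma>(c \<mapsto> column_reply m (snd c) t)"
  have "queried \<sigma> j \<subseteq> cells (2 * m) m" for j
    using inv unfolding adversary_inv_def queried_def by blast
  then have fin: "finite (queried \<sigma> j)" for j
    using finite_cells by (rule finite_subset)
  have new: "c \<notin> queried \<sigma> j" for j
    using None by (simp add: queried_def domIff)
  have queried': "queried \<sigma>' j = (if j = snd c then insert c (queried \<sigma> j) else queried \<sigma> j)" for j
    by (auto simp: queried_def \<sigma>'_def)
  have old: "\<sigma>' ` queried \<sigma> j = \<sigma> ` queried \<sigma> j" for j
    unfolding \<sigma>'_def using new[of j] by (intro image_cong) auto
  have image: "\<sigma> ` queried \<sigma> j = Some ` column_reply m j ` {..<card (queried \<sigma> j)}" for j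
    using inv by (simp add: adversary_inv_def)
  have "\<sigma>' ` queried \<sigma>' j = Some ` column_reply m j ` {..<card (queried \<sigma>' j)}" for j
  proof (cases "j = snd c")
    case True
    have "\<sigma>' ` queried \<sigma>' j = insert (\<sigma>' c) (\<sigma>' ` queried \<sigma> j)"
      using True by (simp add: queried')
    also have "\<dots> = insert (Some (column_reply m j t)) (\<sigma> ` queried \<sigma> j)"
      using True by (simp only: old) (simp add: \<sigma>'_def)
    also have "\<dots> = Some ` column_reply m j ` {..<Suc t}"
      using True by (simp add: image lessThan_Suc t_def)
    finally show ?thesis using True fin new by (simp add: queried' t_def)
  qed (simp add: queried' old image)
  moreover have "dom \<sigma>' \<subseteq> cells (2 * m) m"
    using inv c by (auto simp: adversary_inv_def \<sigma>'_def)
  moreover have "reply (adversary m) \<sigma> c = column_reply m (snd c) t"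
    using None by (simp add: reply_def adversary_def t_def)
  ultimately show ?thesis by (simp add: adversary_inv_def \<sigma>'_def)
next
  case (Some v)
  then have "\<sigma>(c \<mapsto> reply (adversary m) \<sigma> c) = \<sigma>"
    by (auto simp: reply_def)
  then show ?thesis using inv by simp
qed

lemma adversary_inv_run:
  "queries_in (cells (2 * m) m) t \<Longrightarrow> adversary_inv m \<sigma> \<Longrightarrow> adversary_inv m (run (adversary m) t \<sigma>)"
proof (induction t arbitrary: \<sigma>)
  case (Query c k)
  let ?v = "reply (adversary m) \<sigma> c"
  have c: "c \<in> cells (2 * m) m" and next_tree: "queries_in (cells (2 * m) m) (k ?v)"
    using Query.prems(1) queries_in.simps(2) by blast+
  show ?case using Query.IH[OF rangeI next_tree adversary_inv_upd[OF Query.prems(2) c]] by (simp only: run.simps)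
qed simp

lemma finite_dom_adversary_inv: "adversary_inv m \<sigma> \<Longrightarrow> finite (dom \<sigma>)"
  unfolding adversary_inv_def by (metis finite_cells finite_subset)

lemma column_reply_recorded:
  assumes "adversary_inv m \<sigma>" "t < card (queried \<sigma> j)"
  shows "\<exists>c\<in>queried \<sigma> j. \<sigma> c = Some (column_reply m j t)"
proof -
  have "Some (column_reply m j t) \<in> \<sigma> ` queried \<sigma> j"
    using assms by (simp add: adversary_inv_def)
  then show ?thesis by force
qed

lemma recorded_column_reply:
  assumes "adversary_inv m \<sigma>" "c \<in> queried \<sigma> j"
  shows "\<exists>t<card (queried \<sigma> j). \<sigma> c = Some (column_reply m j t)"
proof -
  have "\<sigma> c \<in> Some ` column_reply m j ` {..<card (queried \<sigma> j)}"
    using assms unfolding adversary_inv_def by blast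
  then show ?thesis by auto
qed

lemma unqueried_cell_exists:
  assumes "finite (dom \<sigma>)" "card (queried \<sigma> j) < n"
  shows "\<exists>i\<in>{1..n}. \<sigma> (i, j) = None"
proof (rule ccontr)
  assume "\<not> ?thesis"
  then have "{1..n} \<times> {j} \<subseteq> queried \<sigma> j" by (auto simp: queried_def)
  moreover have "finite (queried \<sigma> j)" using assms(1) by (simp add: queried_def)
  ultimately have "card ({1..n} \<times> {j}) \<le> card (queried \<sigma> j)" by (rule card_mono[rotated])
  then show False using assms(2) by (simp add: card_cartesian_product)
qed


lemma adversary_inv_valid:
  assumes inv: "adversary_inv m \<sigma>" and m: "1 \<le> m" and v: "\<sigma> c = Some v"
  shows "valid_sym (2 * m) m v"
proof -
  have "c \<in> cells (2 * m) m" using inv v by (auto simp: adversary_inv_def)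
  then have "snd c \<le> m" by (auto simp: cells_def)
  moreover obtain t where "v = column_reply m (snd c) t"
    using recorded_column_reply[OF inv, of c "snd c"] v by (auto simp: queried_def)
  ultimately show ?thesis using other_column_range[OF m]
    by (auto simp: valid_sym_def column_reply_def blank_def back_pointer_def lpoint_def rpoint_def bpoint_def)
qed

lemma light_column_blank:
  assumes "adversary_inv m \<sigma>" "card (queried \<sigma> (snd c)) \<le> m" "\<sigma> c = Some v"
  shows "v = blank"
proof -
  obtain t where "t < card (queried \<sigma> (snd c))" "\<sigma> c = Some (column_reply m (snd c) t)"
    using recorded_column_reply[OF assms(1), of c "snd c"] assms(3) by (auto simp: queried_def)
  then show ?thesis using assms(2,3) by (simp add: column_reply_def)
qed


section \<open>Completing the adversary's answers\<close>

definition zero_completion :: "(cell \<rightharpoonup> sym) \<Rightarrow> cell \<Rightarrow> sym" where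
  "zero_completion \<sigma> c = (case \<sigma> c of Some v \<Rightarrow> v | None \<Rightarrow> (False, None, None, None))"

lemma map_le_zero_completion: "\<sigma> \<subseteq>\<^sub>m Some \<circ> zero_completion \<sigma>"
  by (auto simp: map_le_def zero_completion_def)

lemma zero_completion_inputs:
  assumes "adversary_inv m \<sigma>" "1 \<le> m"
  shows "zero_completion \<sigma> \<in> inputs (2 * m) m"
proof -
  have "valid_sym (2 * m) m (zero_completion \<sigma> c)" for c
    using adversary_inv_valid[OF assms, of c]
    by (cases "\<sigma> c") (simp_all add: zero_completion_def valid_sym_def lpoint_def rpoint_def bpoint_def)
  then show ?thesis by (simp add: inputs_def)
qed


lemma not_f_zero_completion:
  assumes inv: "adversary_inv m \<sigma>" and m: "1 \<le> m"
  shows "\<not> f (2 * m) m (zero_completion \<sigma>)"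
proof -
  have "\<exists>i\<in>{1..2 * m}. \<not> val (zero_completion \<sigma> (i, b))" for b
  proof (cases "card (queried \<sigma> b) < 2 * m")
    case True
    then obtain i where "i \<in> {1..2 * m}" "\<sigma> (i, b) = None"
      using unqueried_cell_exists[OF finite_dom_adversary_inv[OF inv]] by blast
    then show ?thesis by (intro bexI[of _ i]) (simp_all add: zero_completion_def val_def)
  next
    case False
    then obtain c where c: "c \<in> queried \<sigma> b" "\<sigma> c = Some (column_reply m b m)"
      using column_reply_recorded[OF inv, of m b] m by auto
    then have "c \<in> cells (2 * m) m" "snd c = b"
      using inv by (auto simp: adversary_inv_def queried_def)
    then show ?thesis using c
      by (force simp: cells_def zero_completion_def val_def column_reply_def back_pointer_def)
  qed
  then show ?thesis unfolding f_def by blast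
qed

lemma light_column_exists:
  assumes fin: "finite (dom \<sigma>)" and small: "card (dom \<sigma>) < m * m"
  shows "\<exists>b\<in>{1..m}. card (queried \<sigma> b) \<le> m"
proof (rule ccontr)
  assume "\<not> ?thesis"
  then have "(\<Sum>j\<in>{1..m}. Suc m) \<le> (\<Sum>j\<in>{1..m}. card (queried \<sigma> j))"
    by (intro sum_mono) (simp add: not_le Suc_le_eq)
  then have "m * Suc m \<le> (\<Sum>j\<in>{1..m}. card (queried \<sigma> j))"
    by simp
  also have "\<dots> = card (\<Union>j\<in>{1..m}. queried \<sigma> j)"
    using fin by (intro card_UN_disjoint[symmetric]) (auto simp: queried_def)
  also have "\<dots> \<le> card (dom \<sigma>)"
    using fin by (intro card_mono) (auto simp: queried_def)
  finally show False using small by simp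
qed

lemma leaf_cell_exists:
  assumes inv: "adversary_inv m \<sigma>" and b: "b \<in> {1..m}" and j: "j \<in> {1..m}" "j \<noteq> b"
  shows "\<exists>c\<in>cells (2 * m) m. snd c = j \<and> (\<sigma> c = None \<or> \<sigma> c = Some (back_pointer b))"
proof (cases "card (queried \<sigma> j) < 2 * m")
  case True
  then obtain i where "i \<in> {1..2 * m}" "\<sigma> (i, j) = None"
    using unqueried_cell_exists[OF finite_dom_adversary_inv[OF inv]] by blast
  then show ?thesis using j by (intro bexI[of _ "(i, j)"]) (auto simp: cells_def)
next
  case False
  obtain s where s: "s < m" "other_column m j s = b"
    using other_column_surj[OF b j(1)] j(2) by metis
  then obtain c where c: "c \<in> queried \<sigma> j" "\<sigma> c = Some (column_reply m j (s + m))"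
    using column_reply_recorded[OF inv, of "s + m" j] False by auto
  then have "c \<in> cells (2 * m) m" "snd c = j"
    using inv by (auto simp: adversary_inv_def queried_def)
  then show ?thesis using c s by (auto simp: column_reply_def)
qed

lemma card_free_cells:
  assumes m: "2 \<le> m" and b: "b \<in> {1..m}" and A: "finite A" "card A < m * m" and B: "finite B" "card B < m"
  shows "m - 2 \<le> card ({c \<in> cells (2 * m) m. snd c \<noteq> b} - A - B)"
proof -
  let ?off = "{c \<in> cells (2 * m) m. snd c \<noteq> b}"
  have "?off = {1..2 * m} \<times> ({1..m} - {b})"
    by (auto simp: cells_def)
  then have "card ?off = 2 * m * (m - 1)"
    using b by (simp add: card_cartesian_product card_Diff_singleton)
  moreover have "card ?off - card A - card B \<le> card (?off - A - B)"
    using diff_card_le_card_Diff[OF A(1), of ?off] diff_card_le_card_Diff[OF B(1), of "?off - A"] by linarith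
  moreover obtain q where "m = q + 2" using m le_Suc_ex by (metis add.commute)
  ultimately show ?thesis using A(2) B(2) by (simp add: algebra_simps)
qed

lemma follow_embedded_path:
  assumes step: "\<And>p d. p \<in> P \<Longrightarrow> (if d then rpoint (x (pos p)) else lpoint (x (pos p))) = Some (pos (p @ [d]))"
    and prefixes: "\<And>k. k < length s \<Longrightarrow> p @ take k s \<in> P"
  shows "follow x (pos p) s = Some (pos (p @ s))"
  using prefixes
proof (induction s arbitrary: p)
  case (Cons d s)
  have "p \<in> P" using Cons.prems[of 0] by simp
  moreover have "follow x (pos (p @ [d])) s = Some (pos ((p @ [d]) @ s))"
  proof (rule Cons.IH)
    show "(p @ [d]) @ take k s \<in> P" if "k < length s" for k
      using Cons.prems[of "Suc k"] that by simp
  qed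
  ultimately show ?case using step[of p d] by (cases d) simp_all
qed simp

locale pointer_witness =
  fixes m :: nat and \<sigma> :: "cell \<rightharpoonup> sym" and b :: nat and a :: cell
    and leaf :: "nat \<Rightarrow> cell" and node :: "bool list \<Rightarrow> cell"
  assumes two_le_m: "2 \<le> m"
    and b: "b \<in> {1..m}"
    and a: "a \<in> cells (2 * m) m" "snd a = b" "\<sigma> a = None"
    and column_b_blank: "\<And>c v. \<sigma> c = Some v \<Longrightarrow> snd c = b \<Longrightarrow> v = blank"
    and \<sigma>_valid: "\<And>c v. \<sigma> c = Some v \<Longrightarrow> valid_sym (2 * m) m v"
    and leaf: "\<And>j. j \<in> {1..m} \<Longrightarrow> leaf j \<in> cells (2 * m) m \<and> snd (leaf j) = j"
    and leaf_free: "\<And>j. j \<in> {1..m} - {b} \<Longrightarrow> \<sigma> (leaf j) = None \<or> \<sigma> (leaf j) = Some (back_pointer b)"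
    and node_inj: "inj_on node (inner_paths (T_tree m))"
    and node_root: "node [] = a"
    and node_free: "\<And>p. p \<in> inner_paths (T_tree m) \<Longrightarrow> p \<noteq> [] \<Longrightarrow>
      node p \<in> cells (2 * m) m \<and> snd (node p) \<noteq> b \<and> \<sigma> (node p) = None \<and> node p \<notin> leaf ` ({1..m} - {b})"
begin

abbreviation inner :: "bool list set" where
  "inner \<equiv> inner_paths (T_tree m)"

definition position :: "bool list \<Rightarrow> cell" where
  "position q = (if q \<in> inner then node q else leaf (the_inv_into {1..m} (T_path m) q))"

definition witness :: "cell \<Rightarrow> sym" where
  "witness c =
    (if c \<in> node ` inner then
       (c = a, Some (position (inv_into inner node c @ [False])),
        Some (position (inv_into inner node c @ [True])), None)
     else if c \<in> leaf ` ({1..m} - {b}) then back_pointer b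
     else case \<sigma> c of Some v \<Rightarrow> v | None \<Rightarrow> (snd c = b, None, None, None))"

lemma root_inner: "[] \<in> inner"
  using root_inner_path length_leaf_paths_T_tree two_le_m by simp

lemma position_leaf: "j \<in> {1..m} \<Longrightarrow> position (T_path m j) = leaf j"
  using leaf_path_not_inner[OF T_path_leaf] the_inv_into_f_f[OF inj_on_T_path]
  by (simp add: position_def)

lemma position_cells:
  assumes "q \<in> inner \<union> set (leaf_paths (T_tree m))"
  shows "position q \<in> cells (2 * m) m"
proof (cases "q \<in> inner")
  case True
  then show ?thesis using node_free[of q] node_root a(1) by (cases "q = []") (auto simp: position_def)
next
  case False
  then obtain j where "j \<in> {1..m}" "q = T_path m j"
    using assms leaf_paths_T_tree[of m] two_le_m by auto
  then show ?thesis using position_leaf leaf by simp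
qed

lemma node_eq_a_iff: "p \<in> inner \<Longrightarrow> node p = a \<longleftrightarrow> p = []"
  using node_free[of p] node_root a(2) by (cases "p = []") auto

lemma leaf_not_node: "j \<in> {1..m} - {b} \<Longrightarrow> leaf j \<notin> node ` inner"
  using node_free node_root a(2) leaf by (force simp: image_iff)

lemma witness_node:
  "p \<in> inner \<Longrightarrow> witness (node p) = (p = [], Some (position (p @ [False])), Some (position (p @ [True])), None)"
  using node_eq_a_iff by (simp add: witness_def inv_into_f_f[OF node_inj])

lemma witness_leaf: "j \<in> {1..m} - {b} \<Longrightarrow> witness (leaf j) = back_pointer b"
  using leaf_not_node by (simp add: witness_def)

lemma witness_other:
  "c \<notin> node ` inner \<Longrightarrow> c \<notin> leaf ` ({1..m} - {b}) \<Longrightarrow>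
    witness c = (case \<sigma> c of Some v \<Rightarrow> v | None \<Rightarrow> (snd c = b, None, None, None))"
  by (simp add: witness_def)


lemma map_le_witness: "\<sigma> \<subseteq>\<^sub>m Some \<circ> witness"
  unfolding map_le_def
proof (intro ballI)
  fix c assume "c \<in> dom \<sigma>"
  then obtain v where v: "\<sigma> c = Some v" by blast
  have not_node: "c \<notin> node ` inner"
  proof
    assume "c \<in> node ` inner"
    then obtain p where "p \<in> inner" "c = node p" by blast
    then show False using v node_free[of p] node_root a(3) by (cases "p = []") auto
  qed
  show "\<sigma> c = (Some \<circ> witness) c"
  proof (cases "c \<in> leaf ` ({1..m} - {b})")
    case True
    then obtain j where "j \<in> {1..m} - {b}" "c = leaf j" by blast
    then show ?thesis using v leaf_free[of j] witness_leaf[of j] by auto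
  qed (use v not_node witness_other in simp)
qed

lemma witness_valid: "c \<in> cells (2 * m) m \<Longrightarrow> valid_sym (2 * m) m (witness c)"
proof -
  assume c: "c \<in> cells (2 * m) m"
  consider p where "p \<in> inner" "c = node p" | j where "j \<in> {1..m} - {b}" "c = leaf j"
    | "c \<notin> node ` inner" "c \<notin> leaf ` ({1..m} - {b})"
    by blast
  then show ?thesis
  proof cases
    case 1
    then show ?thesis using witness_node position_cells inner_path_child
      by (simp add: valid_sym_def lpoint_def rpoint_def bpoint_def)
  next
    case 2
    then show ?thesis using witness_leaf b by (simp add: valid_sym_def back_pointer_def lpoint_def rpoint_def bpoint_def)
  next
    case 3
    then show ?thesis using witness_other \<sigma>_valid
      by (cases "\<sigma> c") (simp_all add: valid_sym_def lpoint_def rpoint_def bpoint_def)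
  qed
qed

lemma witness_inputs: "witness \<in> inputs (2 * m) m"
  using witness_valid by (simp add: inputs_def)

lemma follow_witness:
  assumes j: "j \<in> {1..m}"
  shows "follow witness a (T_path m j) = Some (leaf j)"
proof -
  have "follow witness (position []) (T_path m j) = Some (position ([] @ T_path m j))"
  proof (rule follow_embedded_path[where P = inner])
    show "(if d then rpoint (witness (position p)) else lpoint (witness (position p))) = Some (position (p @ [d]))"
      if "p \<in> inner" for p d
      using that witness_node by (cases d) (simp_all add: position_def lpoint_def rpoint_def)
    show "[] @ take k (T_path m j) \<in> inner" if "k < length (T_path m j)" for k
      using take_leaf_path_inner[OF T_path_leaf[OF j] that] by simp
  qed
  then show ?thesis using position_leaf[OF j] root_inner node_root by (simp add: position_def)
qed

lemma column_b_witness: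
  assumes "c \<in> cells (2 * m) m" "snd c = b"
  shows "val (witness c) \<and> (witness c \<noteq> blank \<longleftrightarrow> c = a)"
proof (cases "c = a")
  case True
  then show ?thesis using witness_node[OF root_inner] node_root by (simp add: val_def blank_def)
next
  case False
  have "c \<notin> node ` inner"
    using False assms(2) node_free node_root by (force simp: image_iff)
  moreover have "c \<notin> leaf ` ({1..m} - {b})"
    using assms(2) leaf by force
  ultimately show ?thesis
    using False witness_other column_b_blank[of c] assms(2) by (cases "\<sigma> c") (auto simp: val_def blank_def)
qed

lemma f_witness: "f (2 * m) m witness"
proof -
  have marked: "\<forall>i\<in>{1..2 * m}. val (witness (i, b))"
    using column_b_witness b by (auto simp: cells_def)
  have unmarked: "\<exists>i\<in>{1..2 * m}. \<not> val (witness (i, j))" if j: "j \<in> {1..m} - {b}" for j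
  proof -
    obtain i where "leaf j = (i, j)" "i \<in> {1..2 * m}"
      using leaf[of j] j by (auto simp: cells_def)
    then show ?thesis using witness_leaf[OF j]
      by (intro bexI[of _ i]) (simp_all add: val_def back_pointer_def)
  qed
  have special: "\<forall>c\<in>cells (2 * m) m. snd c = b \<and> witness c \<noteq> (True, None, None, None) \<longrightarrow> c = a"
    using column_b_witness by (auto simp: blank_def)
  have leaves: "\<exists>l. follow witness a (T_path m j) = Some l \<and> snd l = j \<and> \<not> val (witness l) \<and>
      bpoint (witness l) = Some b" if "j \<in> {1..m} - {b}" for j
    using that follow_witness leaf witness_leaf by (auto simp: val_def bpoint_def back_pointer_def)
  have "witness a \<noteq> (True, None, None, None)"
    using column_b_witness[OF a(1,2)] by (simp add: blank_def)
  then show ?thesis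
    unfolding f_def using b a(1,2) marked unmarked special leaves
    by (intro bexI[of _ b] conjI bexI[of _ a]) blast+
qed

end

lemma inj_on_fixing_point:
  assumes "finite F" "a \<notin> F" "finite P" "card (P - {r}) \<le> card F"
  shows "\<exists>g. g r = a \<and> inj_on g P \<and> (\<forall>p\<in>P - {r}. g p \<in> F)"
proof -
  obtain h where h: "h ` (P - {r}) \<subseteq> F" "inj_on h (P - {r})"
    using card_le_inj[of "P - {r}" F] assms by auto
  define g where "g p = (if p = r then a else h p)" for p
  have "inj_on g P"
    using h assms(2) by (auto simp: g_def inj_on_def)
  then show ?thesis using h by (intro exI[of _ g]) (auto simp: g_def)
qed

lemma inner_node_placement:
  fixes leaf :: "nat \<Rightarrow> cell" and \<sigma> :: "cell \<rightharpoonup> sym"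
  assumes m: "2 \<le> m" and b: "b \<in> {1..m}" and fin: "finite (dom \<sigma>)" and small: "card (dom \<sigma>) < m * m"
    and a: "snd a = b"
  shows "\<exists>node. node [] = a \<and> inj_on node (inner_paths (T_tree m)) \<and>
    (\<forall>p\<in>inner_paths (T_tree m) - {[]}.
      node p \<in> {c \<in> cells (2 * m) m. snd c \<noteq> b} - dom \<sigma> - leaf ` ({1..m} - {b}))"
proof (rule inj_on_fixing_point)
  have "card (leaf ` ({1..m} - {b})) < m"
    using card_image_le[of "{1..m} - {b}" leaf] b m by (simp add: card_Diff_singleton)
  then have "m - 2 \<le> card ({c \<in> cells (2 * m) m. snd c \<noteq> b} - dom \<sigma> - leaf ` ({1..m} - {b}))"
    using card_free_cells[OF m b fin small] by simp
  moreover have "card (inner_paths (T_tree m) - {[]}) = m - 2"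
    using card_inner_paths[of "T_tree m"] length_leaf_paths_T_tree[of m] root_inner_path[of "T_tree m"] m
    by (simp add: finite_inner_paths)
  ultimately show "card (inner_paths (T_tree m) - {[]}) \<le>
      card ({c \<in> cells (2 * m) m. snd c \<noteq> b} - dom \<sigma> - leaf ` ({1..m} - {b}))"
    by simp
next
  show "finite ({c \<in> cells (2 * m) m. snd c \<noteq> b} - dom \<sigma> - leaf ` ({1..m} - {b}))"
    using finite_cells by (rule rev_finite_subset) blast
qed (use a finite_inner_paths in auto)

lemma adversary_inv_one_completion:
  assumes inv: "adversary_inv m \<sigma>" and m: "2 \<le> m" and small: "card (dom \<sigma>) < m * m"
  shows "\<exists>x\<in>inputs (2 * m) m. \<sigma> \<subseteq>\<^sub>m Some \<circ> x \<and> f (2 * m) m x"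
proof -
  have fin: "finite (dom \<sigma>)" using finite_dom_adversary_inv[OF inv] .
  obtain b where b: "b \<in> {1..m}" and light: "card (queried \<sigma> b) \<le> m"
    using light_column_exists[OF fin small] by blast
  obtain i where i: "i \<in> {1..2 * m}" "\<sigma> (i, b) = None"
    using unqueried_cell_exists[OF fin, of b "2 * m"] light m by auto
  define a where "a = (i, b)"
  have a: "a \<in> cells (2 * m) m" "snd a = b" "\<sigma> a = None"
    using i b by (auto simp: a_def cells_def)
  have "\<exists>c\<in>cells (2 * m) m. snd c = j \<and> (j \<noteq> b \<longrightarrow> \<sigma> c = None \<or> \<sigma> c = Some (back_pointer b))"
    if "j \<in> {1..m}" for j
    using a leaf_cell_exists[OF inv b that] by (cases "j = b") auto
  then obtain leaf where leaf: "\<And>j. j \<in> {1..m} \<Longrightarrow> leaf j \<in> cells (2 * m) m \<and> snd (leaf j) = j \<and>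
      (j \<noteq> b \<longrightarrow> \<sigma> (leaf j) = None \<or> \<sigma> (leaf j) = Some (back_pointer b))"
    by metis
  obtain node where node: "node [] = a" "inj_on node (inner_paths (T_tree m))"
    "\<And>p. p \<in> inner_paths (T_tree m) - {[]} \<Longrightarrow>
      node p \<in> {c \<in> cells (2 * m) m. snd c \<noteq> b} - dom \<sigma> - leaf ` ({1..m} - {b})"
    using inner_node_placement[OF m b fin small a(2), where leaf = leaf] by blast
  interpret pointer_witness m \<sigma> b a leaf node
  proof
    show "v = blank" if "\<sigma> c = Some v" "snd c = b" for c v
      using light_column_blank[OF inv] light that by metis
    show "valid_sym (2 * m) m v" if "\<sigma> c = Some v" for c v
      using adversary_inv_valid[OF inv] m that by simp
    show "leaf j \<in> cells (2 * m) m \<and> snd (leaf j) = j" if "j \<in> {1..m}" for j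
      using leaf[OF that] by blast
    show "\<sigma> (leaf j) = None \<or> \<sigma> (leaf j) = Some (back_pointer b)" if "j \<in> {1..m} - {b}" for j
      using leaf[of j] that by blast
    show "node p \<in> cells (2 * m) m \<and> snd (node p) \<noteq> b \<and> \<sigma> (node p) = None \<and>
        node p \<notin> leaf ` ({1..m} - {b})" if "p \<in> inner_paths (T_tree m)" "p \<noteq> []" for p
      using node(3)[of p] that by auto
  qed (use m b a node in auto)
  show ?thesis using witness_inputs map_le_witness f_witness by blast
qed

lemma adversary_lower_bound:
  assumes t: "computes (2 * m) m t" and m: "2 \<le> m"
  shows "\<exists>x\<in>inputs (2 * m) m. m * m \<le> cost t x"
proof (rule ccontr)
  assume "\<not> ?thesis"
  then have cheap: "cost t x < m * m" if "x \<in> inputs (2 * m) m" for x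
    using that by (simp add: not_le)
  have queries: "queries_in (cells (2 * m) m) t" and correct: "\<forall>x\<in>inputs (2 * m) m. eval t x = f (2 * m) m x"
    using t by (simp_all add: computes_def)
  define \<sigma> where "\<sigma> = run (adversary m) t Map.empty"
  have inv: "adversary_inv m \<sigma>"
    unfolding \<sigma>_def by (rule adversary_inv_run[OF queries adversary_inv_empty])
  define x0 where "x0 = zero_completion \<sigma>"
  have x0: "x0 \<in> inputs (2 * m) m" "\<sigma> \<subseteq>\<^sub>m Some \<circ> x0" "\<not> f (2 * m) m x0"
    using zero_completion_inputs[OF inv] map_le_zero_completion not_f_zero_completion[OF inv] m
    by (simp_all add: x0_def)
  have "card (dom \<sigma>) \<le> cost t x0"
    using card_dom_run_le_cost[of "adversary m" t Map.empty x0] x0(2) by (simp add: \<sigma>_def)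
  then have "card (dom \<sigma>) < m * m" using cheap[OF x0(1)] by linarith
  then obtain x1 where x1: "x1 \<in> inputs (2 * m) m" "\<sigma> \<subseteq>\<^sub>m Some \<circ> x1" "f (2 * m) m x1"
    using adversary_inv_one_completion[OF inv m] by blast
  have "eval t x0 = eval t x1"
    using eval_eq_if_run_agrees x0(2) x1(2) unfolding \<sigma>_def by blast
  then show False using correct x0 x1 by simp
qed

theorem theorem2:
  shows "\<exists>m0::nat. \<forall>m\<ge>m0. m \<ge> 1 \<longrightarrow> m ^ 2 \<le> D (2 * m) m"
proof (intro exI[of _ 2] allI impI)
  fix m :: nat assume m: "2 \<le> m"
  obtain t where t: "computes (2 * m) m t" "\<forall>x\<in>inputs (2 * m) m. cost t x \<le> D (2 * m) m"
    using D_attained by blast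
  obtain x where "x \<in> inputs (2 * m) m" "m * m \<le> cost t x"
    using adversary_lower_bound[OF t(1) m] by blast
  then show "m ^ 2 \<le> D (2 * m) m"
    using t(2) by (simp add: power2_eq_square) (meson le_trans)
qed

end
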